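(* Let $\Omega\subset\mathbb{R}^N$ be a nonempty open bounded connected set, $X=\overline{\Omega}$, $Y\subset\mathbb{R}^N$, $\mu\in\mathcal{P}(X)$, $\nu\in\mathcal{P}(Y)$, $H,K:X\to(0,+\infty)$ in $L^1(X,\mu)$, $\mathcal{A}$ a family of balls covering $X$, and $u\in\mathrm{Refo}(\mu;\nu)^{H,K}$. If $u$ is differentiable at $x_0\in\Omega$, then $Ju(x_0)=\det\nabla u(x_0)\neq0$.
   Context: For $u:X\to Y$, $x_0\in X$: $e_u(x_0)=\limsup_{x\to x_0,\,x\ne x_0}\frac{|u(x)-u(x_0)|}{|x-x_0|}$, $c_u(x_0)=\limsup_{x\to x_0,\,x\ne x_0}\frac{|x-x_0|}{|u(x)-u(x_0)|}$ (quotient $+\infty$ if $u(x)=u(x_0)$). $\mathrm{Refo}(\mu;\nu)^{H,K}$ is the set of maps $u:X\to Y$ with $u_\#\mu=\nu$ (i.e. $\mu(u^{-1}(A))=\nu(A)$ for Borel $A$) such that for every $x\in X$ there is $B(x,r)\in\mathcal{A}$ with $c_u(y)\le H(x)$, $e_u(y)\le K(x)$ for all $y\in\overline{B}(x,r)\cap\Omega$. *)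

theory Defs
  imports "HOL-Analysis.Analysis" "HOL-Probability.Probability"
begin

definition expan :: "'a::metric_space set \<Rightarrow> ('a \<Rightarrow> 'b::metric_space) \<Rightarrow> 'a \<Rightarrow> ereal" where
  "expan D u x0 = Limsup (at x0 within D) (\<lambda>x. ereal (dist (u x) (u x0) / dist x x0))"

definition contr :: "'a::metric_space set \<Rightarrow> ('a \<Rightarrow> 'b::metric_space) \<Rightarrow> 'a \<Rightarrow> ereal" where
  "contr D u x0 = Limsup (at x0 within D)
     (\<lambda>x. if u x = u x0 then \<infinity> else ereal (dist x x0 / dist (u x) (u x0)))"

definition Refo ::
  "'a::euclidean_space set \<Rightarrow> 'a measure \<Rightarrow> 'b::euclidean_space measure \<Rightarrow> ('a \<Rightarrow> real) \<Rightarrow> ('a \<Rightarrow> real)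
   \<Rightarrow> 'a set set \<Rightarrow> ('a \<Rightarrow> 'b) set" where
  "Refo \<Omega> \<mu> \<nu> H K \<A> = {u. u \<in> measurable \<mu> \<nu> \<and> distr \<mu> \<nu> u = \<nu> \<and>
     (\<forall>x\<in>closure \<Omega>. \<exists>r>0. ball x r \<in> \<A> \<and>
        (\<forall>y\<in>cball x r \<inter> \<Omega>. contr (closure \<Omega>) u y \<le> ereal (H x) \<and>
                             expan (closure \<Omega>) u y \<le> ereal (K x)))}"

end

theory Submission
  imports Defs
begin

text \<open>A finite upper contraction at \<open>x0\<close> makes \<open>u\<close> locally co-Lipschitz there:
  \<open>|x - x0| \<le> M |u x - u x0|\<close> near \<open>x0\<close>. Dividing by \<open>t\<close> along a ray \<open>x0 + t h\<close> and letting
  \<open>t \<rightarrow> 0\<^sup>+\<close> gives \<open>|h| \<le> M |\<nabla>u(x0) h|\<close>, so the derivative is injective and its determinant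
  is nonzero.\<close>

lemma eventually_dist_less_of_contr_less:
  assumes "contr D u x0 < ereal M"
  shows "\<forall>\<^sub>F x in at x0 within D. dist x x0 < M * dist (u x) (u x0)"
proof -
  have "\<forall>\<^sub>F x in at x0 within D.
      (if u x = u x0 then \<infinity> else ereal (dist x x0 / dist (u x) (u x0))) < ereal M"
    using assms unfolding contr_def by (rule Limsup_lessD)
  then show ?thesis
    by eventually_elim (auto split: if_splits simp: divide_less_eq)
qed

lemma filterlim_ray_at_right:
  fixes x h :: "'a::real_normed_vector"
  assumes "h \<noteq> 0"
  shows "filterlim (\<lambda>t. x + t *\<^sub>R h) (at x) (at_right 0)"
  unfolding filterlim_at
proof
  show "\<forall>\<^sub>F t in at_right 0. x + t *\<^sub>R h \<in> UNIV \<and> x + t *\<^sub>R h \<noteq> x"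
    using assms by (simp add: eventually_at_filter)
  have "((\<lambda>t. x + t *\<^sub>R h) \<longlongrightarrow> x + 0 *\<^sub>R h) (at_right 0)"
    by (intro tendsto_intros)
  then show "((\<lambda>t. x + t *\<^sub>R h) \<longlongrightarrow> x) (at_right 0)"
    by simp
qed

lemma difference_quotient_tendsto_derivative:
  fixes u :: "'a::real_normed_vector \<Rightarrow> 'b::real_normed_vector"
  assumes "(u has_derivative L) (at x)" and "h \<noteq> 0"
  shows "((\<lambda>t. (u (x + t *\<^sub>R h) - u x) /\<^sub>R t) \<longlongrightarrow> L h) (at_right 0)"
proof -
  have lin: "linear L"
    using assms(1) has_derivative_linear by blast
  have "((\<lambda>y. (u y - u x - L (y - x)) /\<^sub>R norm (y - x)) \<longlongrightarrow> 0) (at x)"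
    using assms(1) has_derivative_at_within by blast
  from filterlim_compose[OF this filterlim_ray_at_right[OF assms(2)]]
  have lim: "((\<lambda>t. norm h *\<^sub>R ((u (x + t *\<^sub>R h) - u x - L (t *\<^sub>R h)) /\<^sub>R norm (t *\<^sub>R h)))
      \<longlongrightarrow> norm h *\<^sub>R 0) (at_right 0)"
    by (intro tendsto_intros) simp
  have "\<forall>\<^sub>F t in at_right 0.
      norm h *\<^sub>R ((u (x + t *\<^sub>R h) - u x - L (t *\<^sub>R h)) /\<^sub>R norm (t *\<^sub>R h))
      = (u (x + t *\<^sub>R h) - u x) /\<^sub>R t - L h"
    using eventually_at_right_less[of 0]
    by eventually_elim (use assms(2) in \<open>auto simp: linear_scale[OF lin] algebra_simps\<close>)
  from Lim_transform_eventually[OF lim this]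
  have "((\<lambda>t. (u (x + t *\<^sub>R h) - u x) /\<^sub>R t - L h) \<longlongrightarrow> 0) (at_right 0)"
    by simp
  then show ?thesis
    by (rule LIM_zero_cancel)
qed

lemma norm_le_derivative_of_eventually_dist_le:
  fixes u :: "'a::real_normed_vector \<Rightarrow> 'b::real_normed_vector"
  assumes "(u has_derivative L) (at x)"
    and "\<forall>\<^sub>F y in at x. dist y x \<le> M * dist (u y) (u x)"
  shows "norm h \<le> M * norm (L h)"
proof (cases "h = 0")
  case True
  then show ?thesis
    using linear_0[OF has_derivative_linear[OF assms(1)]] by simp
next
  case False
  have "\<forall>\<^sub>F t in at_right 0. dist (x + t *\<^sub>R h) x \<le> M * dist (u (x + t *\<^sub>R h)) (u x)"
    using assms(2) filterlim_ray_at_right[OF False] by (rule eventually_compose_filterlim)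
  then have bound: "\<forall>\<^sub>F t in at_right 0. norm h \<le> M * norm ((u (x + t *\<^sub>R h) - u x) /\<^sub>R t)"
    using eventually_at_right_less[of 0]
  proof eventually_elim
    case (elim t)
    then have "t * norm h \<le> M * norm (u (x + t *\<^sub>R h) - u x)"
      by (simp add: dist_norm)
    then have "norm h \<le> M * norm (u (x + t *\<^sub>R h) - u x) / t"
      using elim(2) by (simp add: le_divide_eq mult.commute)
    also have "\<dots> = M * norm ((u (x + t *\<^sub>R h) - u x) /\<^sub>R t)"
      using elim(2) by (simp add: divide_inverse)
    finally show ?case .
  qed
  have lim: "((\<lambda>t. M * norm ((u (x + t *\<^sub>R h) - u x) /\<^sub>R t)) \<longlongrightarrow> M * norm (L h)) (at_right 0)"
    using difference_quotient_tendsto_derivative[OF assms(1) False] by (intro tendsto_intros)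
  then show ?thesis
    using bound trivial_limit_at_right_real by (rule tendsto_lowerbound)
qed

lemma det_derivative_nonzero_of_eventually_dist_le:
  fixes u :: "real^'n \<Rightarrow> real^'n"
  assumes "(u has_derivative L) (at x)"
    and "\<forall>\<^sub>F y in at x. dist y x \<le> M * dist (u y) (u x)"
  shows "det (matrix L) \<noteq> 0"
proof -
  have lin: "linear L"
    using assms(1) by (rule has_derivative_linear)
  have "inj L"
    unfolding linear_injective_0[OF lin]
  proof (intro allI impI)
    fix h
    assume "L h = 0"
    then show "h = 0"
      using norm_le_derivative_of_eventually_dist_le[OF assms, of h] by simp
  qed
  then show ?thesis
    using det_nz_iff_inj[OF lin] by simp
qed

theorem lemma2p10:
  fixes \<Omega> Y :: "(real^'n) set"
    and \<mu> \<nu> :: "(real^'n) measure"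
    and H K :: "real^'n \<Rightarrow> real"
    and \<A> :: "(real^'n) set set"
    and u :: "real^'n \<Rightarrow> real^'n"
    and x0 :: "real^'n"
  assumes "open \<Omega>" and "bounded \<Omega>" and "connected \<Omega>" and "\<Omega> \<noteq> {}"
    and "prob_space \<mu>" and "sets \<mu> = sets (restrict_space borel (closure \<Omega>))"
    and "prob_space \<nu>" and "sets \<nu> = sets (restrict_space borel Y)"
    and "\<forall>x\<in>closure \<Omega>. H x > 0" and "\<forall>x\<in>closure \<Omega>. K x > 0"
    and "integrable \<mu> H" and "integrable \<mu> K"
    and "\<forall>B\<in>\<A>. \<exists>c r. r > 0 \<and> B = ball c r"
    and "closure \<Omega> \<subseteq> \<Union>\<A>"
    and "u \<in> Refo \<Omega> \<mu> \<nu> H K \<A>"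
    and "x0 \<in> \<Omega>" and "u differentiable (at x0)"
  shows "det (matrix (frechet_derivative u (at x0))) \<noteq> 0"
proof -
  have deriv: "(u has_derivative frechet_derivative u (at x0)) (at x0)"
    using assms(17) frechet_derivative_works by blast
  have "x0 \<in> closure \<Omega>"
    using assms(16) closure_subset by blast
  then obtain r where "r > 0"
    and "\<forall>y\<in>cball x0 r \<inter> \<Omega>. contr (closure \<Omega>) u y \<le> ereal (H x0)"
    using assms(15) unfolding Refo_def by blast
  then have "contr (closure \<Omega>) u x0 \<le> ereal (H x0)"
    using assms(16) by simp
  then have "contr (closure \<Omega>) u x0 < ereal (H x0 + 1)"
    by (rule order_le_less_trans) simp
  then have "\<forall>\<^sub>F x in at x0 within closure \<Omega>. dist x x0 < (H x0 + 1) * dist (u x) (u x0)"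
    by (rule eventually_dist_less_of_contr_less)
  moreover have "at x0 within closure \<Omega> = at x0"
    using assms(1,16) interior_mono[OF closure_subset, of \<Omega>]
    by (intro at_within_interior) (auto simp: interior_open)
  ultimately have "\<forall>\<^sub>F x in at x0. dist x x0 \<le> (H x0 + 1) * dist (u x) (u x0)"
    by (auto elim: eventually_mono)
  with deriv show ?thesis
    by (rule det_derivative_nonzero_of_eventually_dist_le)
qed

end
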